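(* Let $\mathfrak g$ be a finite-dimensional simple Lie algebra over $\mathbb R$ or $\mathbb C$ and let $T$ be a maximal Lie triple subsystem of $\mathfrak g$. Then either $T$ is a maximal subalgebra of $\mathfrak g$, or $\mathfrak g=[T,T]\oplus T$ is a nontrivial $\mathbb Z_2$-grading of $\mathfrak g$ with even part $[T,T]$ and odd part $T$.
   Context: A Lie algebra $\mathfrak g$ is regarded as a Lie triple system with triple product $[x,y,z]:=[[x,y],z]$. A Lie triple subsystem of $\mathfrak g$ is a vector subspace $T$ with $[[T,T],T]\subseteq T$. A maximal Lie triple subsystem is a proper Lie triple subsystem not properly contained in any other proper Lie triple subsystem. $[T,T]$ denotes the span of all brackets $[x,y]$, $x,y\in T$. *)

theory Defs
  imports Main "HOL.Complex"
begin

text \<open>A Lie algebra over a field 'k: the underlying vector space is the whole type 'a,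
  with scalar multiplication sc and bracket br.\<close>

definition field_iso :: "('k::field \<Rightarrow> 'l::field) \<Rightarrow> bool" where
  "field_iso f \<longleftrightarrow> bij f \<and> (\<forall>x y. f (x + y) = f x + f y) \<and>
     (\<forall>x y. f (x * y) = f x * f y) \<and> f 1 = 1"

definition real_or_complex_field :: "'k::field itself \<Rightarrow> bool" where
  "real_or_complex_field _ \<longleftrightarrow>
     (\<exists>f :: 'k \<Rightarrow> real. field_iso f) \<or> (\<exists>f :: 'k \<Rightarrow> complex. field_iso f)"

definition lie_algebra ::
  "('k::field \<Rightarrow> 'a::ab_group_add \<Rightarrow> 'a) \<Rightarrow> ('a \<Rightarrow> 'a \<Rightarrow> 'a) \<Rightarrow> bool" where
  "lie_algebra sc br \<longleftrightarrow> vector_space sc \<and>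
     (\<forall>x y z. br (x + y) z = br x z + br y z) \<and>
     (\<forall>x y z. br x (y + z) = br x y + br x z) \<and>
     (\<forall>c x y. br (sc c x) y = sc c (br x y)) \<and>
     (\<forall>c x y. br x (sc c y) = sc c (br x y)) \<and>
     (\<forall>x. br x x = 0) \<and>
     (\<forall>x y z. br x (br y z) + br y (br z x) + br z (br x y) = 0)"

definition fin_dim :: "('k::field \<Rightarrow> 'a::ab_group_add \<Rightarrow> 'a) \<Rightarrow> bool" where
  "fin_dim sc \<longleftrightarrow> (\<exists>B. finite B \<and> module.span sc B = UNIV)"

definition lie_ideal ::
  "('k::field \<Rightarrow> 'a::ab_group_add \<Rightarrow> 'a) \<Rightarrow> ('a \<Rightarrow> 'a \<Rightarrow> 'a) \<Rightarrow> 'a set \<Rightarrow> bool" where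
  "lie_ideal sc br I \<longleftrightarrow> module.subspace sc I \<and> (\<forall>x y. y \<in> I \<longrightarrow> br x y \<in> I)"

definition simple_lie_algebra ::
  "('k::field \<Rightarrow> 'a::ab_group_add \<Rightarrow> 'a) \<Rightarrow> ('a \<Rightarrow> 'a \<Rightarrow> 'a) \<Rightarrow> bool" where
  "simple_lie_algebra sc br \<longleftrightarrow> lie_algebra sc br \<and> (\<exists>x y. br x y \<noteq> 0) \<and>
     (\<forall>I. lie_ideal sc br I \<longrightarrow> I = {0} \<or> I = UNIV)"

definition lie_subalgebra ::
  "('k::field \<Rightarrow> 'a::ab_group_add \<Rightarrow> 'a) \<Rightarrow> ('a \<Rightarrow> 'a \<Rightarrow> 'a) \<Rightarrow> 'a set \<Rightarrow> bool" where
  "lie_subalgebra sc br S \<longleftrightarrow> module.subspace sc S \<and> (\<forall>x\<in>S. \<forall>y\<in>S. br x y \<in> S)"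

definition maximal_subalgebra ::
  "('k::field \<Rightarrow> 'a::ab_group_add \<Rightarrow> 'a) \<Rightarrow> ('a \<Rightarrow> 'a \<Rightarrow> 'a) \<Rightarrow> 'a set \<Rightarrow> bool" where
  "maximal_subalgebra sc br S \<longleftrightarrow> lie_subalgebra sc br S \<and> S \<noteq> UNIV \<and>
     (\<forall>S'. lie_subalgebra sc br S' \<and> S' \<noteq> UNIV \<and> S \<subseteq> S' \<longrightarrow> S' = S)"

definition lie_triple_subsystem ::
  "('k::field \<Rightarrow> 'a::ab_group_add \<Rightarrow> 'a) \<Rightarrow> ('a \<Rightarrow> 'a \<Rightarrow> 'a) \<Rightarrow> 'a set \<Rightarrow> bool" where
  "lie_triple_subsystem sc br T \<longleftrightarrow> module.subspace sc T \<and>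
     (\<forall>x\<in>T. \<forall>y\<in>T. \<forall>z\<in>T. br (br x y) z \<in> T)"

definition maximal_lts ::
  "('k::field \<Rightarrow> 'a::ab_group_add \<Rightarrow> 'a) \<Rightarrow> ('a \<Rightarrow> 'a \<Rightarrow> 'a) \<Rightarrow> 'a set \<Rightarrow> bool" where
  "maximal_lts sc br T \<longleftrightarrow> lie_triple_subsystem sc br T \<and> T \<noteq> UNIV \<and>
     (\<forall>T'. lie_triple_subsystem sc br T' \<and> T' \<noteq> UNIV \<and> T \<subseteq> T' \<longrightarrow> T' = T)"

definition bracket_span ::
  "('k::field \<Rightarrow> 'a::ab_group_add \<Rightarrow> 'a) \<Rightarrow> ('a \<Rightarrow> 'a \<Rightarrow> 'a) \<Rightarrow> 'a set \<Rightarrow> 'a set" where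
  "bracket_span sc br T = module.span sc {br x y | x y. x \<in> T \<and> y \<in> T}"

definition z2_grading ::
  "('k::field \<Rightarrow> 'a::ab_group_add \<Rightarrow> 'a) \<Rightarrow> ('a \<Rightarrow> 'a \<Rightarrow> 'a) \<Rightarrow> 'a set \<Rightarrow> 'a set \<Rightarrow> bool" where
  "z2_grading sc br Ev Od \<longleftrightarrow> module.subspace sc Ev \<and> module.subspace sc Od \<and>
     Ev \<inter> Od = {0} \<and> {x + y | x y. x \<in> Ev \<and> y \<in> Od} = UNIV \<and>
     (\<forall>x\<in>Ev. \<forall>y\<in>Ev. br x y \<in> Ev) \<and> (\<forall>x\<in>Ev. \<forall>y\<in>Od. br x y \<in> Od) \<and>
     (\<forall>x\<in>Od. \<forall>y\<in>Ev. br x y \<in> Od) \<and> (\<forall>x\<in>Od. \<forall>y\<in>Od. br x y \<in> Ev)"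

definition nontrivial_z2_grading ::
  "('k::field \<Rightarrow> 'a::ab_group_add \<Rightarrow> 'a) \<Rightarrow> ('a \<Rightarrow> 'a \<Rightarrow> 'a) \<Rightarrow> 'a set \<Rightarrow> 'a set \<Rightarrow> bool" where
  "nontrivial_z2_grading sc br Ev Od \<longleftrightarrow> z2_grading sc br Ev Od \<and> Od \<noteq> {0}"

end

theory Submission
  imports Defs
begin

text \<open>Put \<open>h = [T,T]\<close>. The triple-system axiom together with the Jacobi identity gives
  \<open>[h,T] \<subseteq> T\<close> and \<open>[h,h] \<subseteq> h\<close>, so \<open>h + T\<close> is a subalgebra, in particular a Lie triple
  subsystem containing \<open>T\<close>. If it is proper, maximality forces \<open>h + T = T\<close>: then \<open>T\<close> is a
  subalgebra, and it is maximal among subalgebras because subalgebras are triple subsystems.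
  Otherwise \<open>g = h + T\<close>, and then \<open>h \<inter> T\<close> is an ideal; it is proper, hence zero by
  simplicity, so the sum is direct and the bracket relations are those of a \<open>\<int>\<^sub>2\<close>-grading.
  Neither finite dimension nor the ground field plays a role.\<close>

lemma lie_triple_subsystem_if_lie_subalgebra:
  "lie_subalgebra sc br S \<Longrightarrow> lie_triple_subsystem sc br S"
  unfolding lie_subalgebra_def lie_triple_subsystem_def by blast

lemma maximal_subalgebra_if_maximal_lts:
  assumes "maximal_lts sc br T" and "lie_subalgebra sc br T"
  shows "maximal_subalgebra sc br T"
  using assms lie_triple_subsystem_if_lie_subalgebra
  unfolding maximal_lts_def maximal_subalgebra_def by blast

locale lie_alg = vector_space scale
  for scale :: "'k::field \<Rightarrow> 'a::ab_group_add \<Rightarrow> 'a" (infixr "*s" 75) +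
  fixes br :: "'a \<Rightarrow> 'a \<Rightarrow> 'a"
  assumes bracket_add_left: "br (x + y) z = br x z + br y z"
    and bracket_add_right: "br x (y + z) = br x y + br x z"
    and bracket_scale_left: "br (c *s x) y = c *s br x y"
    and bracket_scale_right: "br x (c *s y) = c *s br x y"
    and bracket_self: "br x x = 0"
    and jacobi: "br x (br y z) + br y (br z x) + br z (br x y) = 0"

lemma lie_alg_if_lie_algebra: "lie_algebra sc br \<Longrightarrow> lie_alg sc br"
  unfolding lie_algebra_def lie_alg_def lie_alg_axioms_def by blast

context lie_alg
begin

lemma bracket_zero_left [simp]: "br 0 y = 0"
  using bracket_add_left[of 0 0 y] by simp

lemma bracket_zero_right [simp]: "br y 0 = 0"
  using bracket_add_right[of y 0 0] by simp

lemma bracket_antisym: "br y x = - br x y"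
proof -
  have "0 = br (x + y) (x + y)" by (rule bracket_self[symmetric])
  also have "\<dots> = br x y + br y x"
    by (simp only: bracket_add_left bracket_add_right) (simp add: bracket_self)
  finally show ?thesis by (metis add_eq_0_iff add.commute)
qed

lemma subspace_bracket_span: "subspace (bracket_span scale br T)"
  unfolding bracket_span_def by simp

lemma bracket_mem_bracket_span:
  "x \<in> T \<Longrightarrow> y \<in> T \<Longrightarrow> br x y \<in> bracket_span scale br T"
  unfolding bracket_span_def by (rule span_base) blast

lemma bracket_span_zero: "bracket_span scale br {0} = {0}"
  unfolding bracket_span_def by simp

end

locale lie_triple_subsys = lie_alg +
  fixes T
  assumes lie_triple_subsystem: "lie_triple_subsystem scale br T"
begin

abbreviation TT where "TT \<equiv> bracket_span scale br T"

lemma subspace_T: "subspace T"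
  using lie_triple_subsystem unfolding lie_triple_subsystem_def by blast

lemma bracket_TT_T: "a \<in> TT \<Longrightarrow> t \<in> T \<Longrightarrow> br a t \<in> T"
  unfolding bracket_span_def
proof (induction a rule: span_induct_alt)
  case base
  show ?case using subspace_T by (simp add: subspace_0)
next
  case (step c x y)
  then have "br x t \<in> T"
    using lie_triple_subsystem unfolding lie_triple_subsystem_def by blast
  with step show ?case
    by (simp add: bracket_add_left bracket_scale_left subspace_T subspace_add subspace_scale)
qed

lemma bracket_T_TT: "t \<in> T \<Longrightarrow> a \<in> TT \<Longrightarrow> br t a \<in> T"
  using bracket_TT_T bracket_antisym subspace_T subspace_neg by metis

text \<open>On a generator \<open>[c,d]\<close>, Jacobi gives \<open>[a,[c,d]] = -[c,[d,a]] - [d,[a,c]]\<close>, and the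
  inner brackets \<open>[d,a]\<close>, \<open>[a,c]\<close> lie in \<open>T\<close>.\<close>
lemma bracket_TT_TT: "a \<in> TT \<Longrightarrow> b \<in> TT \<Longrightarrow> br a b \<in> TT"
proof -
  assume a: "a \<in> TT"
  have generator: "br a (br c d) \<in> TT" if c: "c \<in> T" and d: "d \<in> T" for c d
  proof -
    have "br a (br c d) = - br c (br d a) - br d (br a c)"
      using jacobi[of a c d] by (simp add: algebra_simps eq_neg_iff_add_eq_0 add.assoc)
    moreover have "br c (br d a) \<in> TT"
      using bracket_mem_bracket_span c bracket_T_TT[OF d a] by simp
    moreover have "br d (br a c) \<in> TT"
      using bracket_mem_bracket_span d bracket_TT_T[OF a c] by simp
    ultimately show ?thesis
      using subspace_bracket_span subspace_diff subspace_neg by metis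
  qed
  show "b \<in> TT \<Longrightarrow> br a b \<in> TT"
    unfolding bracket_span_def
  proof (induction b rule: span_induct_alt)
    case base
    show ?case by (simp add: span_zero)
  next
    case (step c x y)
    then show ?case using generator unfolding bracket_span_def
      by (auto simp: bracket_add_right bracket_scale_right span_add span_scale)
  qed
qed

definition sum_TT_T where
  "sum_TT_T = {x + y | x y. x \<in> TT \<and> y \<in> T}"

lemma T_subset_sum_TT_T: "T \<subseteq> sum_TT_T"
  unfolding sum_TT_T_def using subspace_0[OF subspace_bracket_span] by force

lemma lie_subalgebra_sum_TT_T: "lie_subalgebra scale br sum_TT_T"
  unfolding lie_subalgebra_def
proof (intro conjI ballI)
  show "subspace sum_TT_T"
    unfolding sum_TT_T_def by (rule subspace_sums[OF subspace_bracket_span subspace_T])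
next
  fix x y assume "x \<in> sum_TT_T" "y \<in> sum_TT_T"
  then obtain a1 t1 a2 t2 where x: "x = a1 + t1" and y: "y = a2 + t2"
    and a1: "a1 \<in> TT" and t1: "t1 \<in> T" and a2: "a2 \<in> TT" and t2: "t2 \<in> T"
    unfolding sum_TT_T_def by auto
  have "br x y = (br a1 a2 + br t1 t2) + (br a1 t2 + br t1 a2)"
    unfolding x y by (simp add: bracket_add_left bracket_add_right algebra_simps)
  moreover have "br a1 a2 + br t1 t2 \<in> TT"
    using bracket_TT_TT[OF a1 a2] bracket_mem_bracket_span[OF t1 t2]
      subspace_bracket_span subspace_add by blast
  moreover have "br a1 t2 + br t1 a2 \<in> T"
    using bracket_TT_T[OF a1 t2] bracket_T_TT[OF t1 a2] subspace_T subspace_add by blast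
  ultimately show "br x y \<in> sum_TT_T" unfolding sum_TT_T_def by blast
qed

lemma lie_ideal_TT_inter_T:
  assumes "sum_TT_T = UNIV"
  shows "lie_ideal scale br (TT \<inter> T)"
  unfolding lie_ideal_def
proof (intro conjI allI impI)
  show "subspace (TT \<inter> T)" using subspace_bracket_span subspace_T by (rule subspace_inter)
next
  fix x y assume y: "y \<in> TT \<inter> T"
  obtain a t where x: "x = a + t" and a: "a \<in> TT" and t: "t \<in> T"
    using assms unfolding sum_TT_T_def by blast
  have "br x y = br a y + br t y" unfolding x by (simp add: bracket_add_left)
  moreover have "br a y \<in> TT \<inter> T" using bracket_TT_TT[OF a] bracket_TT_T[OF a] y by auto
  moreover have "br t y \<in> TT \<inter> T"
    using bracket_mem_bracket_span[OF t] bracket_T_TT[OF t] y by auto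
  ultimately show "br x y \<in> TT \<inter> T"
    using subspace_add subspace_inter[OF subspace_bracket_span subspace_T] by metis
qed

lemma z2_grading_TT_T:
  assumes "sum_TT_T = UNIV" and "TT \<inter> T = {0}"
  shows "z2_grading scale br TT T"
  using assms subspace_bracket_span subspace_T
  unfolding z2_grading_def sum_TT_T_def
  by (simp add: bracket_TT_TT bracket_TT_T bracket_T_TT bracket_mem_bracket_span)

end

theorem mainTheorem5:
  fixes sc :: "'k::field \<Rightarrow> 'a::ab_group_add \<Rightarrow> 'a"
    and br :: "'a \<Rightarrow> 'a \<Rightarrow> 'a"
    and T :: "'a set"
  assumes "real_or_complex_field TYPE('k)"
    and "simple_lie_algebra sc br"
    and "fin_dim sc"
    and "maximal_lts sc br T"
  shows "maximal_subalgebra sc br T \<or>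
         nontrivial_z2_grading sc br (bracket_span sc br T) T"
proof -
  have simple: "lie_algebra sc br" "\<exists>x y. br x y \<noteq> 0"
    "\<And>I. lie_ideal sc br I \<Longrightarrow> I = {0} \<or> I = UNIV"
    using assms(2) unfolding simple_lie_algebra_def by auto
  have maximal: "lie_triple_subsystem sc br T" "T \<noteq> UNIV"
    "\<And>T'. lie_triple_subsystem sc br T' \<Longrightarrow> T' \<noteq> UNIV \<Longrightarrow> T \<subseteq> T' \<Longrightarrow> T' = T"
    using assms(4) unfolding maximal_lts_def by auto
  interpret lie_triple_subsys sc br T
    using lie_alg_if_lie_algebra[OF simple(1)] maximal(1)
    by (simp add: lie_triple_subsys_def lie_triple_subsys_axioms_def)
  show ?thesis
  proof (cases "sum_TT_T = UNIV")
    case False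
    then have "sum_TT_T = T"
      using maximal(3) T_subset_sum_TT_T lie_subalgebra_sum_TT_T
        lie_triple_subsystem_if_lie_subalgebra by blast
    then show ?thesis
      using maximal_subalgebra_if_maximal_lts assms(4) lie_subalgebra_sum_TT_T by metis
  next
    case True
    have "TT \<inter> T = {0}" using simple(3)[OF lie_ideal_TT_inter_T[OF True]] maximal(2) by auto
    moreover have "T \<noteq> {0}"
    proof
      assume "T = {0}"
      then have "sum_TT_T = {0}" unfolding sum_TT_T_def by (simp add: bracket_span_zero)
      with True simple(2) show False by (metis UNIV_I singletonD)
    qed
    ultimately show ?thesis
      using z2_grading_TT_T[OF True] unfolding nontrivial_z2_grading_def by blast
  qed
qed

end
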